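(* Let $n\ge 1$ and let $J\subseteq[n]$ be a $k$-element subset. Let $\pi,\hat\pi\in S_J$. Then the points $(\pi(1),\dots,\pi(n))$ and $(\hat\pi(1),\dots,\hat\pi(n))$ are joined by an edge of the bridge polytope $\mathrm{Br}_J$ if and only if there exist $i<\ell$ in $[n]$ such that $\hat\pi=(i\,\ell)\pi$ and $\pi(j)=\hat\pi(j)=j$ for every $j$ with $i<j<\ell$. In other words, $\pi$ and $\hat\pi$ differ by swapping the values $i$ and $\ell$, and each of $i+1,\dots,\ell-1$ is a fixed point of both $\pi$ and $\hat\pi$.
   Context: For $J\subseteq[n]=\{1,\dots,n\}$, let $S_J=\{\pi\in S_n:\ \pi(j)\ge j \text{ for all } j\in J,\ \pi(j)\le j \text{ for all } j\notin J\}$. The bridge polytope is $\mathrm{Br}_J=\operatorname{conv}\{(\pi(1),\dots,\pi(n)) : \pi\in S_J\}\subset\mathbb{R}^n$; each $\pi\in S_J$ is identified with the point $(\pi(1),\dots,\pi(n))$, and these points are the vertices of $\mathrm{Br}_J$. For a transposition $(i\,\ell)$ and $\pi\in S_n$, $(i\,\ell)\pi$ denotes the composition $(i\,\ell)\circ\pi$, i.e. the permutation obtained from $\pi$ by swapping the values $i$ and $\ell$. *)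

theory Defs
  imports "HOL-Analysis.Analysis" "HOL-Combinatorics.Transposition" "HOL-Combinatorics.Permutations"
begin

definition S_J :: "nat \<Rightarrow> nat set \<Rightarrow> (nat \<Rightarrow> nat) set" where
  "S_J n J = {\<pi>. \<pi> permutes {1..n} \<and> (\<forall>j\<in>J. j \<le> \<pi> j) \<and> (\<forall>j\<in>{1..n} - J. \<pi> j \<le> j)}"

text \<open>R^n is modelled as real^'n for a finite linearly ordered index type 'n with CARD('n) = n;
  coord_idx is the order isomorphism 'n -> {1..n}.\<close>
definition coord_idx :: "'n::{finite,linorder} \<Rightarrow> nat" where
  "coord_idx j = card {k. k < j} + 1"

definition perm_point :: "(nat \<Rightarrow> nat) \<Rightarrow> real ^ ('n::{finite,linorder})" where
  "perm_point \<pi> = (\<chi> j. real (\<pi> (coord_idx j)))"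

definition bridge_polytope :: "nat \<Rightarrow> nat set \<Rightarrow> (real ^ ('n::{finite,linorder})) set" where
  "bridge_polytope n J = convex hull (perm_point ` S_J n J)"

definition joined_by_edge :: "'a::real_vector set \<Rightarrow> 'a \<Rightarrow> 'a \<Rightarrow> bool" where
  "joined_by_edge P p q \<longleftrightarrow> p \<noteq> q \<and> closed_segment p q face_of P"

end

theory Submission
  imports Defs
begin

text \<open>All vertices of \<open>Br_J\<close> lie on a common sphere, so \<open>[\<pi>, \<pi>']\<close> is an edge iff some linear
  functional \<open>w\<close> attains its maximum over \<open>S_J\<close> exactly at \<open>\<pi>\<close> and \<open>\<pi>'\<close>.

  If \<open>\<pi>' = (i l) \<pi>\<close> with \<open>i+1, \<dots>, l-1\<close> fixed, a suitable functional is minus the potential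
  \<open>\<Sum>\<^sub>t \<Sum>\<^bsub>\<pi> x \<le> t\<^esub> \<sigma> x \<plusminus> \<Sum>\<^bsub>i<j<l\<^esub> \<sigma> j\<close>, the outer sum ranging over thresholds \<open>t < i\<close> and \<open>t \<ge> l\<close>:
  each partial sum is minimal iff \<open>\<sigma>\<close> maps the sublevel set of \<open>\<pi>\<close> onto \<open>{1..t}\<close>, and the signed
  terms pin down the fixed points, leaving only \<open>\<pi>\<close> and \<open>\<pi>'\<close>.

  Conversely, an exchange argument shows that along a maximizer the weights \<open>w\<close> increase with
  the values, for any two positions that can both take values on either side of a threshold.
  Applied to the two maximizers at the least value where they differ, this forces them to differ
  by a swap of two positions of equal weight; a non-fixed value strictly between the swapped
  values would yield a third maximizer.\<close>

section \<open>Linear functionals on \<open>S_J\<close>\<close>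

definition admissible :: "nat set \<Rightarrow> nat \<Rightarrow> nat \<Rightarrow> bool" where
  "admissible J x v \<longleftrightarrow> (x \<in> J \<longrightarrow> x \<le> v) \<and> (x \<notin> J \<longrightarrow> v \<le> x)"

definition straddles :: "nat set \<Rightarrow> nat \<Rightarrow> nat \<Rightarrow> bool" where
  "straddles J x t \<longleftrightarrow> admissible J x (t - 1) \<and> admissible J x t"

definition weight :: "nat \<Rightarrow> (nat \<Rightarrow> real) \<Rightarrow> (nat \<Rightarrow> nat) \<Rightarrow> real" where
  "weight n w \<sigma> = (\<Sum>x\<in>{1..n}. w x * real (\<sigma> x))"

definition maximizers :: "nat \<Rightarrow> nat set \<Rightarrow> (nat \<Rightarrow> real) \<Rightarrow> (nat \<Rightarrow> nat) set" where
  "maximizers n J w = {\<sigma> \<in> S_J n J. \<forall>\<tau>\<in>S_J n J. weight n w \<tau> \<le> weight n w \<sigma>}"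

definition bridge_swap :: "nat \<Rightarrow> (nat \<Rightarrow> nat) \<Rightarrow> (nat \<Rightarrow> nat) \<Rightarrow> bool" where
  "bridge_swap n \<pi> \<pi>' \<longleftrightarrow> (\<exists>i l. i \<in> {1..n} \<and> l \<in> {1..n} \<and> i < l \<and>
     \<pi>' = Transposition.transpose i l \<circ> \<pi> \<and> (\<forall>j. i < j \<and> j < l \<longrightarrow> \<pi> j = j \<and> \<pi>' j = j))"

lemma admissible_between:
  "admissible J x v1 \<Longrightarrow> admissible J x v2 \<Longrightarrow> v1 \<le> v \<Longrightarrow> v \<le> v2 \<Longrightarrow> admissible J x v"
  unfolding admissible_def by auto

lemma straddlesI:
  assumes "admissible J x v1" "admissible J x v2" "v1 < t" "t \<le> v2"
  shows "straddles J x t"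
  using admissible_between[OF assms(1,2), of "t - 1"] admissible_between[OF assms(1,2), of t] assms(3,4)
  unfolding straddles_def by simp

lemma admissible_straddles:
  assumes "admissible J x v" "x \<noteq> v"
  shows "straddles J x v" "straddles J x (v + 1)"
  using assms unfolding straddles_def admissible_def by auto

lemma S_J_iff:
  "J \<subseteq> {1..n} \<Longrightarrow> \<sigma> \<in> S_J n J \<longleftrightarrow> \<sigma> permutes {1..n} \<and> (\<forall>x\<in>{1..n}. admissible J x (\<sigma> x))"
  unfolding S_J_def admissible_def by auto

lemma S_J_permutes: "\<sigma> \<in> S_J n J \<Longrightarrow> \<sigma> permutes {1..n}"
  unfolding S_J_def by auto

lemma S_J_admissible: "J \<subseteq> {1..n} \<Longrightarrow> \<sigma> \<in> S_J n J \<Longrightarrow> x \<in> {1..n} \<Longrightarrow> admissible J x (\<sigma> x)"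
  using S_J_iff by blast

lemma comp_transpose_in_S_J:
  assumes J: "J \<subseteq> {1..n}" and \<sigma>: "\<sigma> \<in> S_J n J" and xy: "x \<in> {1..n}" "y \<in> {1..n}"
    and "admissible J x (\<sigma> y)" "admissible J y (\<sigma> x)"
  shows "\<sigma> \<circ> Transposition.transpose x y \<in> S_J n J"
  unfolding S_J_iff[OF J]
proof
  show "\<sigma> \<circ> Transposition.transpose x y permutes {1..n}"
    using permutes_compose[OF permutes_swap_id[OF xy] S_J_permutes[OF \<sigma>]] .
  show "\<forall>z\<in>{1..n}. admissible J z ((\<sigma> \<circ> Transposition.transpose x y) z)"
  proof
    fix z assume "z \<in> {1..n}"
    then show "admissible J z ((\<sigma> \<circ> Transposition.transpose x y) z)"
      using assms S_J_admissible[OF J \<sigma>] by (cases "z = x"; cases "z = y") auto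
  qed
qed

lemma comp_transpose_neq:
  assumes "inj \<sigma>" "y \<noteq> z"
  shows "\<sigma> \<circ> Transposition.transpose y z \<noteq> \<sigma>"
  using assms by (metis comp_apply injD transpose_apply_first)

lemma weight_comp_transpose:
  assumes "x \<in> {1..n}" "y \<in> {1..n}" "x \<noteq> y"
  shows "weight n w (\<sigma> \<circ> Transposition.transpose x y)
    = weight n w \<sigma> + (w x - w y) * (real (\<sigma> y) - real (\<sigma> x))"
proof -
  let ?d = "\<lambda>z. w z * real ((\<sigma> \<circ> Transposition.transpose x y) z) - w z * real (\<sigma> z)"
  have "weight n w (\<sigma> \<circ> Transposition.transpose x y) - weight n w \<sigma> = (\<Sum>z\<in>{1..n}. ?d z)"
    unfolding weight_def by (simp only: sum_subtractf)
  also have "\<dots> = (\<Sum>z\<in>{x,y}. ?d z)"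
    by (rule sum.mono_neutral_right) (use assms in \<open>auto simp: transpose_def\<close>)
  also have "\<dots> = (w x - w y) * (real (\<sigma> y) - real (\<sigma> x))"
    using assms by (simp add: algebra_simps)
  finally show ?thesis by linarith
qed

lemma weight_uminus: "weight n (\<lambda>x. - w x) \<sigma> = - weight n w \<sigma>"
  by (simp add: weight_def sum_negf)

lemma maximizers_S_J: "maximizers n J w \<subseteq> S_J n J"
  unfolding maximizers_def by auto

lemma maximizer_weight_le_of_swap:
  assumes J: "J \<subseteq> {1..n}" and \<sigma>: "\<sigma> \<in> maximizers n J w" and xy: "x \<in> {1..n}" "y \<in> {1..n}"
    and "admissible J x (\<sigma> y)" "admissible J y (\<sigma> x)" and less: "\<sigma> y < \<sigma> x"
  shows "w y \<le> w x"
proof -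
  have "\<sigma> \<circ> Transposition.transpose x y \<in> S_J n J"
    using comp_transpose_in_S_J[OF J _ xy] assms maximizers_S_J by blast
  then have "weight n w (\<sigma> \<circ> Transposition.transpose x y) \<le> weight n w \<sigma>"
    using \<sigma> unfolding maximizers_def by blast
  moreover have "x \<noteq> y" using less by auto
  ultimately have "(w x - w y) * (real (\<sigma> y) - real (\<sigma> x)) \<le> 0"
    using weight_comp_transpose[OF xy] by fastforce
  then show ?thesis using less by (simp add: mult_le_0_iff)
qed

lemma maximizers_comp_transpose:
  assumes J: "J \<subseteq> {1..n}" and \<sigma>: "\<sigma> \<in> maximizers n J w" and xy: "x \<in> {1..n}" "y \<in> {1..n}"
    and "admissible J x (\<sigma> y)" "admissible J y (\<sigma> x)" and "w x = w y"
  shows "\<sigma> \<circ> Transposition.transpose x y \<in> maximizers n J w"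
proof (cases "x = y")
  case False
  have "\<sigma> \<circ> Transposition.transpose x y \<in> S_J n J"
    using comp_transpose_in_S_J[OF J _ xy] assms maximizers_S_J by blast
  moreover have "weight n w (\<sigma> \<circ> Transposition.transpose x y) = weight n w \<sigma>"
    using weight_comp_transpose[OF xy False] \<open>w x = w y\<close> by simp
  ultimately show ?thesis using \<sigma> unfolding maximizers_def by simp
qed (use \<sigma> in simp)

text \<open>If swapping \<open>x\<close> and \<open>y\<close> is not admissible, the value \<open>v = x\<close> or \<open>v = y\<close> lies strictly
  between \<open>\<sigma> y\<close> and \<open>\<sigma> x\<close>, and both positions are compared with the preimage of \<open>v\<close>.\<close>
lemma maximizer_weight_mono:
  assumes J: "J \<subseteq> {1..n}" and \<sigma>: "\<sigma> \<in> maximizers n J w"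
  shows "x \<in> {1..n} \<Longrightarrow> y \<in> {1..n} \<Longrightarrow> \<sigma> y < t \<Longrightarrow> t \<le> \<sigma> x \<Longrightarrow> straddles J x t
    \<Longrightarrow> straddles J y t \<Longrightarrow> w y \<le> w x"
proof (induction "\<sigma> x - \<sigma> y" arbitrary: x y t rule: less_induct)
  case less
  have \<sigma>_perm: "\<sigma> permutes {1..n}" and adm: "\<And>z. z \<in> {1..n} \<Longrightarrow> admissible J z (\<sigma> z)"
    using \<sigma> maximizers_S_J S_J_permutes S_J_admissible[OF J] by blast+
  have pivot: "w y \<le> w x"
    if v: "v \<in> {1..n}" "\<sigma> y < v" "v < \<sigma> x" "\<sigma> v \<noteq> v"
      and "straddles J x (v + 1)" "straddles J y v" for v
  proof -
    obtain u where u: "u \<in> {1..n}" "\<sigma> u = v"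
      using v(1) permutes_image[OF \<sigma>_perm] by (metis imageE)
    have "u \<noteq> v" using u v by auto
    then have u_straddles: "straddles J u v" "straddles J u (v + 1)"
      using admissible_straddles[of J u v] adm[OF u(1)] u(2) by auto
    have "w u \<le> w x"
      by (rule less.hyps[of x u "v + 1"]) (use less.prems u v that u_straddles in auto)
    moreover have "w y \<le> w u"
      by (rule less.hyps[of u y v]) (use less.prems u v that u_straddles in auto)
    ultimately show ?thesis by simp
  qed
  consider "admissible J x (\<sigma> y)" "admissible J y (\<sigma> x)"
    | "\<not> admissible J x (\<sigma> y)" | "\<not> admissible J y (\<sigma> x)" by blast
  then show ?case
  proof cases
    case 1
    then show ?thesis
      using maximizer_weight_le_of_swap[OF J \<sigma> less.prems(1,2)] less.prems(3,4) by simp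
  next
    case 2
    then have "x \<in> J" "\<sigma> y < x" "x < t"
      using less.prems(3,5) unfolding straddles_def admissible_def by auto
    then show ?thesis
      by (intro pivot[of x])
         (use less.prems adm[OF less.prems(2)] in \<open>auto simp: straddles_def admissible_def\<close>)
  next
    case 3
    then have "y \<notin> J" "y < \<sigma> x" "t \<le> y"
      using less.prems(4,6) unfolding straddles_def admissible_def by auto
    then show ?thesis
      by (intro pivot[of y])
         (use less.prems adm[OF less.prems(1)] in \<open>auto simp: straddles_def admissible_def\<close>)
  qed
qed

section \<open>Two maximizers differ by a bridge swap\<close>

lemma permutes_least_disagreement:
  fixes p q :: "'a::linorder \<Rightarrow> 'a"
  assumes S: "finite S" and p: "p permutes S" and q: "q permutes S" and "p \<noteq> q"
  obtains y z where "y \<in> S" "z \<in> S" "p z = q y" "p z < p y" "q y < q z"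
proof -
  define D where "D = {x \<in> S. p x \<noteq> q x}"
  have "D \<noteq> {}"
  proof
    assume "D = {}"
    then have "p x = q x" for x
      using permutes_not_in[OF p] permutes_not_in[OF q] by (cases "x \<in> S") (auto simp: D_def)
    with \<open>p \<noteq> q\<close> show False by blast
  qed
  moreover have "finite D" using S by (simp add: D_def)
  ultimately have "Min (p ` D) \<in> p ` D" by simp
  then obtain z where "z \<in> D" "p z = Min (p ` D)" by (rule imageE) simp
  with \<open>finite D\<close> have z: "z \<in> S" "p z \<noteq> q z" and least: "\<And>x. x \<in> D \<Longrightarrow> p z \<le> p x"
    by (auto simp: D_def)
  have inj: "\<And>a b. p a = p b \<Longrightarrow> a = b" "\<And>a b. q a = q b \<Longrightarrow> a = b"
    using permutes_inj[OF p] permutes_inj[OF q] by (auto dest: injD)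
  have "p z \<in> q ` S" using permutes_image[OF q] permutes_in_image[OF p] z(1) by simp
  then obtain y where y: "y \<in> S" "q y = p z" by (rule imageE) simp
  have "y \<noteq> z" using y z by auto
  have "y \<in> D" using y z inj(1)[of y z] by (auto simp: D_def)
  then have "p z < p y" using least \<open>y \<noteq> z\<close> inj(1)[of y z] by fastforce
  have "q z \<in> p ` S" using permutes_image[OF p] permutes_in_image[OF q] z(1) by simp
  then obtain x where x: "x \<in> S" "p x = q z" by (rule imageE) simp
  have "x \<in> D" using x z inj(2)[of x z] by (auto simp: D_def)
  then have "q y < q z" using least x y \<open>y \<noteq> z\<close> inj(2)[of z y] by fastforce
  show thesis
    by (rule that[OF y(1) z(1) y(2)[symmetric] \<open>p z < p y\<close> \<open>q y < q z\<close>])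
qed

context
  fixes n J w \<pi> \<pi>'
  assumes J: "J \<subseteq> {1..n}" and max: "maximizers n J w = {\<pi>, \<pi>'}"
begin

private lemma in_S_J: "\<pi> \<in> S_J n J" "\<pi>' \<in> S_J n J"
  using max maximizers_S_J by blast+

private lemma admissible_values:
  "x \<in> {1..n} \<Longrightarrow> admissible J x (\<pi> x)" "x \<in> {1..n} \<Longrightarrow> admissible J x (\<pi>' x)"
  using S_J_admissible[OF J] in_S_J by blast+

private lemma maximizer_pair_eq_swap:
  assumes yz: "y \<in> {1..n}" "z \<in> {1..n}" and w: "w y = w z"
    and least: "\<pi> z = \<pi>' y" "\<pi> z < \<pi> y" "\<pi>' y < \<pi>' z"
  shows "\<pi>' = \<pi> \<circ> Transposition.transpose y z"
proof -
  have perm: "\<pi> permutes {1..n}" "\<pi>' permutes {1..n}"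
    using in_S_J S_J_permutes by blast+
  have "y \<noteq> z" using least by auto
  note adm = admissible_values[OF yz(1)] admissible_values[OF yz(2)]
  show ?thesis
  proof (cases "\<pi> y \<le> \<pi>' z")
    case True
    then have "admissible J z (\<pi> y)"
      using admissible_between[of J z "\<pi> z" "\<pi>' z"] adm least by simp
    then have "\<pi> \<circ> Transposition.transpose y z \<in> {\<pi>, \<pi>'}"
      using maximizers_comp_transpose[OF J _ yz, where w = w and \<sigma> = \<pi>] max adm least w by simp
    then show ?thesis
      using comp_transpose_neq[OF permutes_inj[OF perm(1)] \<open>y \<noteq> z\<close>] by auto
  next
    case False
    then have "admissible J y (\<pi>' z)"
      using admissible_between[of J y "\<pi>' y" "\<pi> y"] adm least by simp
    then have "\<pi>' \<circ> Transposition.transpose y z \<in> {\<pi>, \<pi>'}"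
      using maximizers_comp_transpose[OF J _ yz, where w = w and \<sigma> = \<pi>'] max adm least w by simp
    then have "\<pi>' \<circ> Transposition.transpose y z = \<pi>"
      using comp_transpose_neq[OF permutes_inj[OF perm(2)] \<open>y \<noteq> z\<close>] by auto
    then show ?thesis by (metis comp_assoc comp_id transpose_comp_involutory)
  qed
qed

lemma maximizer_pair_swap:
  assumes "\<pi> \<noteq> \<pi>'"
  obtains y z where "y \<in> {1..n}" "z \<in> {1..n}" "\<pi> z < \<pi> y"
    "\<pi>' = \<pi> \<circ> Transposition.transpose y z" "w y = w z"
proof -
  have perm: "\<pi> permutes {1..n}" "\<pi>' permutes {1..n}"
    using in_S_J S_J_permutes by blast+
  obtain y z where yz: "y \<in> {1..n}" "z \<in> {1..n}"
    and least: "\<pi> z = \<pi>' y" "\<pi> z < \<pi> y" "\<pi>' y < \<pi>' z"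
    using permutes_least_disagreement[OF _ perm \<open>\<pi> \<noteq> \<pi>'\<close>] by blast
  note adm = admissible_values[OF yz(1)] admissible_values[OF yz(2)]
  have y_straddles: "straddles J y (\<pi> z + 1)"
    by (rule straddlesI[of _ _ "\<pi>' y" "\<pi> y"]) (use adm least in auto)
  have z_straddles: "straddles J z (\<pi> z + 1)"
    by (rule straddlesI[of _ _ "\<pi> z" "\<pi>' z"]) (use adm least in auto)
  have "w z \<le> w y"
    by (rule maximizer_weight_mono[OF J _ yz, where \<sigma> = \<pi> and t = "\<pi> z + 1"])
       (use max least y_straddles z_straddles in auto)
  moreover have "w y \<le> w z"
    by (rule maximizer_weight_mono[OF J _ yz(2,1), where \<sigma> = \<pi>' and t = "\<pi> z + 1"])
       (use max least y_straddles z_straddles in auto)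
  ultimately have w: "w y = w z" by simp
  with that yz least maximizer_pair_eq_swap[OF yz w least] show thesis by simp
qed

private lemma no_third_maximizer:
  assumes uv: "u \<in> {1..n}" "v \<in> {1..n}" and "w u = w v"
    and "admissible J u (\<pi> v)" "admissible J v (\<pi> u)" and "\<pi>' u = \<pi> u" "\<pi> v \<noteq> \<pi> u"
  shows False
proof -
  have "\<pi> \<circ> Transposition.transpose u v \<in> {\<pi>, \<pi>'}"
    using maximizers_comp_transpose[OF J _ uv, where w = w and \<sigma> = \<pi>] max assms(3-5) by simp
  moreover have "\<forall>\<sigma>\<in>{\<pi>, \<pi>'}. \<sigma> u = \<pi> u" using \<open>\<pi>' u = \<pi> u\<close> by simp
  ultimately have "(\<pi> \<circ> Transposition.transpose u v) u = \<pi> u" by (rule bspec[rotated])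
  with \<open>\<pi> v \<noteq> \<pi> u\<close> show False by simp
qed

lemma maximizer_pair_fixes_between:
  assumes yz: "y \<in> {1..n}" "z \<in> {1..n}"
    and \<pi>': "\<pi>' = \<pi> \<circ> Transposition.transpose y z" and w: "w y = w z"
    and j: "\<pi> z < j" "j < \<pi> y"
  shows "\<pi> j = j"
proof (rule ccontr)
  assume "\<pi> j \<noteq> j"
  have perm: "\<pi> permutes {1..n}" using in_S_J S_J_permutes by blast
  have "j \<in> {1..n}"
    using j yz permutes_in_image[OF perm, of y] permutes_in_image[OF perm, of z] by auto
  then obtain u where u: "u \<in> {1..n}" "\<pi> u = j"
    using permutes_image[OF perm] by (metis imageE)
  have "u \<noteq> j" "u \<noteq> y" "u \<noteq> z" using u j \<open>\<pi> j \<noteq> j\<close> by auto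
  then have "\<pi>' u = \<pi> u" using \<pi>' by simp
  note adm = admissible_values[OF yz(1)] admissible_values[OF yz(2)] admissible_values(1)[OF u(1)]
  have "w z \<le> w u"
    by (rule maximizer_weight_mono[OF J _ u(1) yz(2), where \<sigma> = \<pi> and t = j])
       (use max u j \<open>u \<noteq> j\<close> admissible_straddles[of J u j] straddlesI[of J z "\<pi> z" "\<pi>' z"] adm \<pi>' in auto)
  moreover have "w u \<le> w y"
    by (rule maximizer_weight_mono[OF J _ yz(1) u(1), where \<sigma> = \<pi> and t = "j + 1"])
       (use max u j \<open>u \<noteq> j\<close> admissible_straddles[of J u j] straddlesI[of J y "\<pi>' y" "\<pi> y"] adm \<pi>' in auto)
  ultimately have "w u = w y" "w u = w z" using w by auto
  show False
  proof (cases "u \<in> J")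
    case True
    then have "admissible J u (\<pi> y)" "admissible J y (\<pi> u)"
      using adm u j admissible_between[of J y "\<pi>' y" "\<pi> y" j] \<pi>' by (auto simp: admissible_def)
    with no_third_maximizer[OF u(1) yz(1) \<open>w u = w y\<close>] show False
      using \<open>\<pi>' u = \<pi> u\<close> u j by simp
  next
    case False
    then have "admissible J u (\<pi> z)" "admissible J z (\<pi> u)"
      using adm u j admissible_between[of J z "\<pi> z" "\<pi>' z" j] \<pi>' by (auto simp: admissible_def)
    with no_third_maximizer[OF u(1) yz(2) \<open>w u = w z\<close>] show False
      using \<open>\<pi>' u = \<pi> u\<close> u j by simp
  qed
qed

lemma maximizer_pair_bridge_swap:
  assumes "\<pi> \<noteq> \<pi>'"
  shows "bridge_swap n \<pi> \<pi>'"
proof -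
  have perm: "\<pi> permutes {1..n}" using in_S_J S_J_permutes by blast
  obtain y z where yz: "y \<in> {1..n}" "z \<in> {1..n}" and less: "\<pi> z < \<pi> y"
    and \<pi>': "\<pi>' = \<pi> \<circ> Transposition.transpose y z" and w: "w y = w z"
    using maximizer_pair_swap[OF assms] by blast
  have swap: "\<pi>' = Transposition.transpose (\<pi> z) (\<pi> y) \<circ> \<pi>"
    using transpose_comp_eq[OF permutes_bij[OF perm]] permutes_inverses(2)[OF perm] \<pi>'
    by (simp add: transpose_commute)
  moreover have "\<pi> j = j \<and> \<pi>' j = j" if "\<pi> z < j" "j < \<pi> y" for j
    using maximizer_pair_fixes_between[OF yz \<pi>' w that] that swap by auto
  moreover have "\<pi> y \<in> {1..n}" "\<pi> z \<in> {1..n}"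
    using yz permutes_in_image[OF perm] by auto
  ultimately show ?thesis
    unfolding bridge_swap_def using less by blast
qed

end

section \<open>A functional maximized exactly at a bridge swap\<close>

lemma sum_card_lower_bound:
  fixes B :: "nat set"
  assumes "finite B" "0 \<notin> B"
  shows "\<Sum>{1..card B} \<le> \<Sum>B \<and> (\<Sum>B = \<Sum>{1..card B} \<longrightarrow> B = {1..card B})"
  using assms
proof (induction "card B" arbitrary: B)
  case 0
  then show ?case by simp
next
  case (Suc k)
  define m where "m = Max B"
  have "B \<noteq> {}" using Suc.hyps(2) by auto
  then have "m \<in> B" using Suc.prems by (simp add: m_def)
  have card: "card (B - {m}) = k" using Suc.hyps(2) \<open>m \<in> B\<close> Suc.prems by simp
  have IH: "\<Sum>{1..k} \<le> \<Sum>(B - {m}) \<and> (\<Sum>(B - {m}) = \<Sum>{1..k} \<longrightarrow> B - {m} = {1..k})"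
    using Suc.hyps(1)[of "B - {m}"] card Suc.prems by auto
  have "B \<subseteq> {1..m}"
  proof
    fix x assume "x \<in> B"
    then have "x \<noteq> 0" "x \<le> m"
      using Suc.prems by (metis, simp add: m_def)
    then show "x \<in> {1..m}" by simp
  qed
  then have "Suc k \<le> m" using card_mono[of "{1..m}" B] Suc.hyps(2) by simp
  have sum_B: "\<Sum>B = m + \<Sum>(B - {m})" using Suc.prems \<open>m \<in> B\<close> by (simp add: sum.remove)
  show ?case
  proof
    show "\<Sum>{1..card B} \<le> \<Sum>B"
      using IH \<open>Suc k \<le> m\<close> sum_B Suc.hyps(2)[symmetric] by simp
    show "\<Sum>B = \<Sum>{1..card B} \<longrightarrow> B = {1..card B}"
    proof
      assume "\<Sum>B = \<Sum>{1..card B}"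
      then have "m = Suc k" "\<Sum>(B - {m}) = \<Sum>{1..k}"
        using IH \<open>Suc k \<le> m\<close> sum_B Suc.hyps(2)[symmetric] by simp_all
      then have "B = insert (Suc k) {1..k}" using IH \<open>m \<in> B\<close> by auto
      then show "B = {1..card B}" using Suc.hyps(2)[symmetric] by auto
    qed
  qed
qed

definition sublevel :: "nat \<Rightarrow> (nat \<Rightarrow> nat) \<Rightarrow> nat \<Rightarrow> nat set" where
  "sublevel n p t = {x \<in> {1..n}. p x \<le> t}"

lemma image_sublevel:
  assumes "p permutes {1..n}" "t \<le> n"
  shows "p ` sublevel n p t = {1..t}"
proof
  show "p ` sublevel n p t \<subseteq> {1..t}"
  proof
    fix v assume "v \<in> p ` sublevel n p t"
    then obtain x where x: "x \<in> sublevel n p t" "v = p x" by (rule imageE) simp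
    then have "x \<in> {1..n}" "p x \<le> t" by (simp_all add: sublevel_def)
    then have "p x \<in> {1..n}" using permutes_in_image[OF assms(1)] by blast
    then show "v \<in> {1..t}" using x(2) \<open>p x \<le> t\<close> by simp
  qed
  show "{1..t} \<subseteq> p ` sublevel n p t"
  proof
    fix v assume v: "v \<in> {1..t}"
    then have "v \<in> p ` {1..n}" using assms(2) permutes_image[OF assms(1)] by simp
    then obtain x where x: "x \<in> {1..n}" "v = p x" by (rule imageE) simp
    then show "v \<in> p ` sublevel n p t"
      using v by (intro image_eqI[of v p x]) (auto simp: sublevel_def)
  qed
qed

lemma sum_sublevel_eq:
  assumes "\<sigma> permutes {1..n}" "\<sigma> ` sublevel n p t = {1..t}"
  shows "(\<Sum>x\<in>sublevel n p t. \<sigma> x) = \<Sum>{1..t}"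
proof -
  have "inj_on \<sigma> (sublevel n p t)"
    using permutes_inj[OF assms(1)] by (auto intro: inj_on_subset)
  then show ?thesis using sum.reindex[of \<sigma> "sublevel n p t" id] assms(2) by simp
qed

lemma sum_sublevel_ge:
  assumes p: "p permutes {1..n}" and \<sigma>: "\<sigma> permutes {1..n}" and "t \<le> n"
  shows "\<Sum>{1..t} \<le> (\<Sum>x\<in>sublevel n p t. \<sigma> x)
    \<and> ((\<Sum>x\<in>sublevel n p t. \<sigma> x) = \<Sum>{1..t} \<longrightarrow> \<sigma> ` sublevel n p t = {1..t})"
proof -
  have inj: "inj_on \<sigma> (sublevel n p t)" "inj_on p (sublevel n p t)"
    using permutes_inj[OF \<sigma>] permutes_inj[OF p] by (auto intro: inj_on_subset)
  have "card (\<sigma> ` sublevel n p t) = t"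
    using card_image[OF inj(1)] card_image[OF inj(2)] image_sublevel[OF p \<open>t \<le> n\<close>] by simp
  moreover have "\<sigma> x \<noteq> 0" if "x \<in> sublevel n p t" for x
  proof -
    have "x \<in> {1..n}" using that by (simp add: sublevel_def)
    then have "\<sigma> x \<in> {1..n}" using permutes_in_image[OF \<sigma>] by blast
    then show ?thesis by simp
  qed
  then have "0 \<notin> \<sigma> ` sublevel n p t" by (metis image_iff)
  moreover have "(\<Sum>x\<in>sublevel n p t. \<sigma> x) = \<Sum>(\<sigma> ` sublevel n p t)"
    using sum.reindex[OF inj(1), of id] by simp
  ultimately show ?thesis
    using sum_card_lower_bound[of "\<sigma> ` sublevel n p t"] by (simp add: sublevel_def)
qed

lemma value_from_sublevels:
  assumes "inj_on \<sigma> {1..n}" and "x \<in> {1..n}" "p x = v" "1 \<le> v"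
    and "\<sigma> ` sublevel n p v = {1..v}" "\<sigma> ` sublevel n p (v - 1) = {1..v - 1}"
  shows "\<sigma> x = v"
proof (rule ccontr)
  assume "\<sigma> x \<noteq> v"
  have "x \<in> sublevel n p v" using assms(2,3) by (simp add: sublevel_def)
  then have "\<sigma> x \<in> {1..v}" using assms(5) by blast
  with \<open>\<sigma> x \<noteq> v\<close> have "\<sigma> x \<in> {1..v - 1}" by auto
  then have "\<sigma> x \<in> \<sigma> ` sublevel n p (v - 1)" using assms(6) by simp
  then obtain x' where x': "x' \<in> sublevel n p (v - 1)" "\<sigma> x = \<sigma> x'" by (rule imageE) simp
  then have "x' \<in> {1..n}" by (simp add: sublevel_def)
  with x' have "x' = x" using inj_onD[OF assms(1)] assms(2) by metis
  then have "p x \<le> v - 1" using x'(1) by (simp add: sublevel_def)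
  then show False using assms(3,4) by arith
qed

lemma weight_sublevel_decomposition:
  fixes p \<sigma> :: "nat \<Rightarrow> nat" and m :: "nat \<Rightarrow> real"
  assumes "finite T" "M \<subseteq> {1..n}"
  shows "weight n (\<lambda>x. real (card {t \<in> T. p x \<le> t}) + (if x \<in> M then m x else 0)) \<sigma>
    = (\<Sum>t\<in>T. real (\<Sum>x\<in>sublevel n p t. \<sigma> x)) + (\<Sum>j\<in>M. m j * real (\<sigma> j))"
proof -
  have summand: "(real (card {t \<in> T. p x \<le> t}) + (if x \<in> M then m x else 0)) * real (\<sigma> x)
      = (\<Sum>t\<in>T. if p x \<le> t then real (\<sigma> x) else 0) + (if x \<in> M then m x * real (\<sigma> x) else 0)" for x
  proof -
    have "real (card {t \<in> T. p x \<le> t}) * real (\<sigma> x) = (\<Sum>t\<in>{t \<in> T. p x \<le> t}. real (\<sigma> x))"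
      by simp
    also have "\<dots> = (\<Sum>t\<in>T. if p x \<le> t then real (\<sigma> x) else 0)"
      by (rule sum.inter_filter[OF assms(1)])
    finally show ?thesis by (simp add: distrib_right)
  qed
  have "weight n (\<lambda>x. real (card {t \<in> T. p x \<le> t}) + (if x \<in> M then m x else 0)) \<sigma>
      = (\<Sum>x\<in>{1..n}. \<Sum>t\<in>T. if p x \<le> t then real (\<sigma> x) else 0)
        + (\<Sum>x\<in>{1..n}. if x \<in> M then m x * real (\<sigma> x) else 0)"
    unfolding weight_def summand by (rule sum.distrib)
  also have "(\<Sum>x\<in>{1..n}. \<Sum>t\<in>T. if p x \<le> t then real (\<sigma> x) else 0)
      = (\<Sum>t\<in>T. real (\<Sum>x\<in>sublevel n p t. \<sigma> x))"
  proof -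
    have "real (\<Sum>x\<in>sublevel n p t. \<sigma> x) = (\<Sum>x\<in>{1..n}. if p x \<le> t then real (\<sigma> x) else 0)" for t
      unfolding sublevel_def of_nat_sum by (rule sum.inter_filter) simp
    then show ?thesis by (subst sum.swap) simp
  qed
  also have "(\<Sum>x\<in>{1..n}. if x \<in> M then m x * real (\<sigma> x) else 0) = (\<Sum>j\<in>M. m j * real (\<sigma> j))"
    using assms(2) by (simp add: sum.If_cases Int_absorb1)
  finally show ?thesis .
qed

lemma inj_fixing_all_but_two:
  assumes inj: "inj q" and fixes_others: "\<And>v. v \<noteq> a \<Longrightarrow> v \<noteq> b \<Longrightarrow> q v = v"
  shows "q = id \<or> q = Transposition.transpose a b"
proof -
  have inj': "q x = q y \<Longrightarrow> x = y" for x y using inj by (auto dest: injD)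
  have "q c \<in> {a, b}" if "c \<in> {a, b}" for c
  proof (rule ccontr)
    assume "q c \<notin> {a, b}"
    then have "q (q c) = q c" using fixes_others by simp
    then have "q c = c" using inj' by simp
    with \<open>q c \<notin> {a, b}\<close> that show False by simp
  qed
  then have qa: "q a \<in> {a, b}" and qb: "q b \<in> {a, b}" by simp_all
  show ?thesis
  proof (cases "q a = a")
    case True
    with qb inj'[of b a] have "q b = b" by auto
    have "q x = x" for x
      using True \<open>q b = b\<close> fixes_others[of x] by (cases "x = a"; cases "x = b") auto
    then show ?thesis by auto
  next
    case False
    with qa have "q a = b" by simp
    with qb inj'[of b a] have "q b = a" by auto
    have "q x = Transposition.transpose a b x" for x
      using \<open>q a = b\<close> \<open>q b = a\<close> fixes_others[of x] by (cases "x = a"; cases "x = b") auto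
    then show ?thesis by auto
  qed
qed

lemma permutes_eq_or_transpose:
  assumes p: "p permutes S" and \<sigma>: "\<sigma> permutes S"
    and agree: "\<And>x. x \<in> S \<Longrightarrow> p x \<noteq> a \<Longrightarrow> p x \<noteq> b \<Longrightarrow> \<sigma> x = p x"
  shows "\<sigma> = p \<or> \<sigma> = Transposition.transpose a b \<circ> p"
proof -
  define q where "q = \<sigma> \<circ> inv p"
  have q: "q permutes S" unfolding q_def using permutes_compose[OF permutes_inv[OF p] \<sigma>] .
  have "q v = v" if "v \<noteq> a" "v \<noteq> b" for v
  proof (cases "v \<in> S")
    case True
    then have "inv p v \<in> S" "p (inv p v) = v"
      using permutes_in_image[OF permutes_inv[OF p]] permutes_inverses(1)[OF p] by auto
    then show ?thesis using agree[of "inv p v"] that by (simp add: q_def)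
  next
    case False
    then show ?thesis using permutes_not_in[OF q] by simp
  qed
  then have "q = id \<or> q = Transposition.transpose a b"
    by (rule inj_fixing_all_but_two[OF permutes_inj[OF q]])
  moreover have "\<sigma> = q \<circ> p" using permutes_inv_o(2)[OF p] by (simp add: q_def comp_assoc)
  ultimately show ?thesis by auto
qed

lemma transpose_image_eq_of_iff:
  assumes "a \<in> A \<longleftrightarrow> b \<in> A"
  shows "Transposition.transpose a b ` A = A"
proof (rule set_eqI)
  fix x
  have "Transposition.transpose a b x \<in> A \<longleftrightarrow> x \<in> A"
    using assms by (cases "x = a"; cases "x = b") simp_all
  then show "x \<in> Transposition.transpose a b ` A \<longleftrightarrow> x \<in> A"
    by (simp add: in_transpose_image_iff)
qed

locale bridge_swap_pair =
  fixes n :: nat and J :: "nat set" and \<pi> :: "nat \<Rightarrow> nat" and i l :: nat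
  assumes J_subset: "J \<subseteq> {1..n}" and \<pi>_in: "\<pi> \<in> S_J n J"
    and swap_in: "Transposition.transpose i l \<circ> \<pi> \<in> S_J n J"
    and i_in: "i \<in> {1..n}" and l_in: "l \<in> {1..n}" and i_less_l: "i < l"
    and fixed_between: "\<And>j. i < j \<Longrightarrow> j < l \<Longrightarrow> \<pi> j = j"
begin

definition thresholds :: "nat set" where
  "thresholds = {t \<in> {1..n}. t < i \<or> l \<le> t}"

definition orientation :: "nat \<Rightarrow> real" where
  "orientation j = (if j \<in> J then 1 else -1)"

definition potential :: "(nat \<Rightarrow> nat) \<Rightarrow> real" where
  "potential \<sigma> = (\<Sum>t\<in>thresholds. real (\<Sum>x\<in>sublevel n \<pi> t. \<sigma> x))
    + (\<Sum>j\<in>{i<..<l}. orientation j * real (\<sigma> j))"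

lemma potential_eq_weight:
  "potential \<sigma> = weight n (\<lambda>x. real (card {t \<in> thresholds. \<pi> x \<le> t})
    + (if x \<in> {i<..<l} then orientation x else 0)) \<sigma>"
proof -
  have "{i<..<l} \<subseteq> {1..n}" using i_in l_in by auto
  moreover have "finite thresholds" by (simp add: thresholds_def)
  ultimately show ?thesis
    unfolding potential_def
    using weight_sublevel_decomposition[where T = thresholds and M = "{i<..<l}" and m = orientation]
    by simp
qed

lemma \<pi>_permutes: "\<pi> permutes {1..n}"
  using \<pi>_in by (rule S_J_permutes)

lemma potential_lower_bound:
  assumes \<sigma>: "\<sigma> \<in> S_J n J"
  shows "potential \<pi> \<le> potential \<sigma>"
    and "potential \<sigma> = potential \<pi> \<Longrightarrow>
      (\<forall>t\<in>thresholds. \<sigma> ` sublevel n \<pi> t = {1..t}) \<and> (\<forall>j\<in>{i<..<l}. \<sigma> j = j)"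
proof -
  let ?L = "\<lambda>\<sigma> t. real (\<Sum>x\<in>sublevel n \<pi> t. \<sigma> x)"
  let ?M = "\<lambda>\<sigma> j. orientation j * real (\<sigma> j)"
  have level: "?L \<pi> t \<le> ?L \<sigma> t \<and> (?L \<pi> t = ?L \<sigma> t \<longrightarrow> \<sigma> ` sublevel n \<pi> t = {1..t})"
    if "t \<in> thresholds" for t
  proof -
    have "t \<le> n" using that by (simp add: thresholds_def)
    then have "(\<Sum>x\<in>sublevel n \<pi> t. \<pi> x) = \<Sum>{1..t}"
      using sum_sublevel_eq[OF \<pi>_permutes image_sublevel[OF \<pi>_permutes]] by blast
    with sum_sublevel_ge[OF \<pi>_permutes S_J_permutes[OF \<sigma>] \<open>t \<le> n\<close>] show ?thesis
      by (simp only: of_nat_le_iff of_nat_eq_iff) auto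
  qed
  have middle: "?M \<pi> j \<le> ?M \<sigma> j \<and> (?M \<pi> j = ?M \<sigma> j \<longrightarrow> \<sigma> j = j)" if "j \<in> {i<..<l}" for j
  proof -
    have "j \<in> {1..n}" using that i_in l_in by auto
    then have "admissible J j (\<sigma> j)" using S_J_admissible[OF J_subset \<sigma>] by blast
    then show ?thesis
      using that fixed_between[of j] by (auto simp: orientation_def admissible_def)
  qed
  have sums: "sum (?L \<pi>) thresholds \<le> sum (?L \<sigma>) thresholds" "sum (?M \<pi>) {i<..<l} \<le> sum (?M \<sigma>) {i<..<l}"
    using level middle by (auto intro: sum_mono)
  then show "potential \<pi> \<le> potential \<sigma>" unfolding potential_def by simp
  assume "potential \<sigma> = potential \<pi>"
  then have eqL: "sum (?L \<pi>) thresholds = sum (?L \<sigma>) thresholds"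
    and eqM: "sum (?M \<pi>) {i<..<l} = sum (?M \<sigma>) {i<..<l}"
    using sums unfolding potential_def by linarith+
  have "?L \<pi> t = ?L \<sigma> t" if "t \<in> thresholds" for t
    using sum_mono_inv[OF eqL _ that] level by (simp add: thresholds_def)
  moreover have "?M \<pi> j = ?M \<sigma> j" if "j \<in> {i<..<l}" for j
    using sum_mono_inv[OF eqM _ that] middle by simp
  ultimately show "(\<forall>t\<in>thresholds. \<sigma> ` sublevel n \<pi> t = {1..t}) \<and> (\<forall>j\<in>{i<..<l}. \<sigma> j = j)"
    using level middle by blast
qed

lemma potential_swap: "potential (Transposition.transpose i l \<circ> \<pi>) = potential \<pi>"
proof -
  have swap_permutes: "Transposition.transpose i l \<circ> \<pi> permutes {1..n}"
    using swap_in by (rule S_J_permutes)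
  have "(\<Sum>x\<in>sublevel n \<pi> t. (Transposition.transpose i l \<circ> \<pi>) x) = (\<Sum>x\<in>sublevel n \<pi> t. \<pi> x)"
    if "t \<in> thresholds" for t
  proof -
    have "t \<le> n" "i \<in> {1..t} \<longleftrightarrow> l \<in> {1..t}"
      using that i_in l_in i_less_l by (auto simp: thresholds_def)
    then have "(Transposition.transpose i l \<circ> \<pi>) ` sublevel n \<pi> t = {1..t}"
      unfolding image_comp[symmetric] image_sublevel[OF \<pi>_permutes \<open>t \<le> n\<close>]
      by (intro transpose_image_eq_of_iff) simp
    moreover have "\<pi> ` sublevel n \<pi> t = {1..t}"
      using image_sublevel[OF \<pi>_permutes \<open>t \<le> n\<close>] .
    ultimately show ?thesis
      using sum_sublevel_eq[OF swap_permutes] sum_sublevel_eq[OF \<pi>_permutes] by metis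
  qed
  moreover have "(Transposition.transpose i l \<circ> \<pi>) j = \<pi> j" if "j \<in> {i<..<l}" for j
    using that fixed_between[of j] by auto
  ultimately show ?thesis unfolding potential_def by simp
qed

lemma sublevels_determine:
  assumes \<sigma>: "\<sigma> \<in> S_J n J"
    and levels: "\<forall>t\<in>thresholds. \<sigma> ` sublevel n \<pi> t = {1..t}" and middle: "\<forall>j\<in>{i<..<l}. \<sigma> j = j"
  shows "\<sigma> = \<pi> \<or> \<sigma> = Transposition.transpose i l \<circ> \<pi>"
proof (rule permutes_eq_or_transpose[OF \<pi>_permutes S_J_permutes[OF \<sigma>]])
  have inj: "inj_on \<sigma> {1..n}"
    using permutes_inj[OF S_J_permutes[OF \<sigma>]] by (auto intro: inj_on_subset)
  have "sublevel n \<pi> 0 = {}"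
  proof -
    have "\<pi> x \<noteq> 0" if "x \<in> {1..n}" for x
      using that permutes_in_image[OF \<pi>_permutes, of x] by simp
    then show ?thesis by (auto simp: sublevel_def)
  qed
  then have level: "\<sigma> ` sublevel n \<pi> t = {1..t}" if "t \<in> thresholds \<or> t = 0" for t
    using that levels by auto
  fix x assume x: "x \<in> {1..n}" "\<pi> x \<noteq> i" "\<pi> x \<noteq> l"
  have v: "\<pi> x \<in> {1..n}" using x(1) permutes_in_image[OF \<pi>_permutes] by blast
  consider "\<pi> x < i" | "l < \<pi> x" | "i < \<pi> x" "\<pi> x < l" using x by linarith
  then show "\<sigma> x = \<pi> x"
  proof cases
    case 1
    then have "\<pi> x \<in> thresholds" "\<pi> x - 1 \<in> thresholds \<or> \<pi> x - 1 = 0"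
      using v by (auto simp: thresholds_def)
    then show ?thesis
      using v level by (intro value_from_sublevels[OF inj x(1) refl]) auto
  next
    case 2
    then have "\<pi> x \<in> thresholds" "\<pi> x - 1 \<in> thresholds"
      using v l_in by (auto simp: thresholds_def)
    then show ?thesis
      using v level by (intro value_from_sublevels[OF inj x(1) refl]) auto
  next
    case 3
    then have "\<pi> (\<pi> x) = \<pi> x" using fixed_between by blast
    then have "\<pi> x = x" using permutes_inj[OF \<pi>_permutes] by (auto dest: injD)
    then show ?thesis using middle 3 by auto
  qed
qed

lemma maximizers_neg_potential:
  "maximizers n J (\<lambda>x. - (real (card {t \<in> thresholds. \<pi> x \<le> t})
      + (if x \<in> {i<..<l} then orientation x else 0)))
    = {\<pi>, Transposition.transpose i l \<circ> \<pi>}" (is "maximizers n J ?w = _")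
proof -
  have weight: "weight n ?w \<sigma> = - potential \<sigma>" for \<sigma>
    by (simp only: weight_uminus potential_eq_weight)
  have "\<sigma> \<in> maximizers n J ?w \<longleftrightarrow> \<sigma> \<in> S_J n J \<and> potential \<sigma> = potential \<pi>" for \<sigma>
  proof
    assume "\<sigma> \<in> maximizers n J ?w"
    then have "\<sigma> \<in> S_J n J" "potential \<sigma> \<le> potential \<pi>"
      using \<pi>_in unfolding maximizers_def weight by auto
    then show "\<sigma> \<in> S_J n J \<and> potential \<sigma> = potential \<pi>"
      using potential_lower_bound(1) by (simp add: antisym)
  next
    assume "\<sigma> \<in> S_J n J \<and> potential \<sigma> = potential \<pi>"
    then show "\<sigma> \<in> maximizers n J ?w"
      using potential_lower_bound(1) unfolding maximizers_def weight by auto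
  qed
  moreover have "\<sigma> \<in> S_J n J \<and> potential \<sigma> = potential \<pi>
      \<longleftrightarrow> \<sigma> \<in> {\<pi>, Transposition.transpose i l \<circ> \<pi>}" for \<sigma>
  proof
    assume "\<sigma> \<in> S_J n J \<and> potential \<sigma> = potential \<pi>"
    then have "\<sigma> = \<pi> \<or> \<sigma> = Transposition.transpose i l \<circ> \<pi>"
      using potential_lower_bound(2)[of \<sigma>] sublevels_determine[of \<sigma>] by blast
    then show "\<sigma> \<in> {\<pi>, Transposition.transpose i l \<circ> \<pi>}" by simp
  next
    assume "\<sigma> \<in> {\<pi>, Transposition.transpose i l \<circ> \<pi>}"
    then show "\<sigma> \<in> S_J n J \<and> potential \<sigma> = potential \<pi>"
      using \<pi>_in swap_in potential_swap by auto
  qed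
  ultimately show ?thesis by (intro set_eqI) (rule trans)
qed

end

lemma bridge_swap_imp_unique_maximizers:
  assumes "J \<subseteq> {1..n}" "\<pi> \<in> S_J n J" "\<pi>' \<in> S_J n J" "bridge_swap n \<pi> \<pi>'"
  obtains w where "maximizers n J w = {\<pi>, \<pi>'}"
proof -
  obtain i l where "i \<in> {1..n}" "l \<in> {1..n}" "i < l" and \<pi>': "\<pi>' = Transposition.transpose i l \<circ> \<pi>"
    and "\<And>j. i < j \<Longrightarrow> j < l \<Longrightarrow> \<pi> j = j"
    using assms(4) unfolding bridge_swap_def by blast
  then interpret bridge_swap_pair n J \<pi> i l
    using assms by unfold_locales auto
  show thesis using that maximizers_neg_potential \<pi>' by blast
qed

lemma bridge_swap_iff_unique_maximizers:
  assumes J: "J \<subseteq> {1..n}" and "\<pi> \<in> S_J n J" "\<pi>' \<in> S_J n J"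
  shows "bridge_swap n \<pi> \<pi>' \<longleftrightarrow> \<pi> \<noteq> \<pi>' \<and> (\<exists>w. maximizers n J w = {\<pi>, \<pi>'})"
proof
  assume swap: "bridge_swap n \<pi> \<pi>'"
  then obtain i l where "i \<in> {1..n}" "i < l" "\<pi>' = Transposition.transpose i l \<circ> \<pi>"
    unfolding bridge_swap_def by blast
  moreover obtain z where "\<pi> z = i"
    using \<open>i \<in> {1..n}\<close> permutes_image[OF S_J_permutes[OF assms(2)]] by (metis imageE)
  ultimately have "\<pi> \<noteq> \<pi>'" by (metis comp_apply less_irrefl transpose_apply_first)
  moreover obtain w where "maximizers n J w = {\<pi>, \<pi>'}"
    using bridge_swap_imp_unique_maximizers[OF assms swap] .
  ultimately show "\<pi> \<noteq> \<pi>' \<and> (\<exists>w. maximizers n J w = {\<pi>, \<pi>'})" by blast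
next
  assume "\<pi> \<noteq> \<pi>' \<and> (\<exists>w. maximizers n J w = {\<pi>, \<pi>'})"
  then show "bridge_swap n \<pi> \<pi>'" using maximizer_pair_bridge_swap[OF J] by blast
qed

section \<open>Edges of the bridge polytope\<close>

lemma closed_segment_norm_eq_endpoints:
  fixes p q x :: "'a::real_inner"
  assumes x: "x \<in> closed_segment p q" and "norm x = norm p" "norm q = norm p"
  shows "x = p \<or> x = q"
proof -
  obtain u where x_eq: "x = (1 - u) *\<^sub>R p + u *\<^sub>R q"
    using x unfolding closed_segment_def by auto
  have norms: "inner x x = inner p p" "inner q q = inner p p"
    using assms(2,3) by (simp_all add: norm_eq)
  have "inner x x = (1 - u) * (1 - u) * inner p p + 2 * u * (1 - u) * inner p q + u * u * inner q q"
    unfolding x_eq by (simp add: inner_commute algebra_simps)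
  then have "u * (1 - u) * (inner p q - inner p p) = 0"
    using norms by (simp add: algebra_simps)
  then have "u = 0 \<or> u = 1 \<or> inner p q = inner p p" by auto
  moreover have "p = q" if "inner p q = inner p p"
  proof -
    have "inner (p - q) (p - q) = 0"
      using that norms(2) by (simp add: inner_diff_left inner_diff_right inner_commute)
    then show ?thesis by simp
  qed
  ultimately show ?thesis using x_eq by auto
qed

lemma argmax_eq_if_closed_segment_face_of:
  fixes V :: "'a::euclidean_space set"
  assumes "finite V" "P \<in> V" "Q \<in> V" and sphere: "\<And>v. v \<in> V \<Longrightarrow> norm v = norm P"
    and "closed_segment P Q face_of convex hull V"
  obtains a where "{v \<in> V. \<forall>u\<in>V. a \<bullet> u \<le> a \<bullet> v} = {P, Q}"
proof -
  have "closed_segment P Q exposed_face_of convex hull V"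
    using assms exposed_face_of_polyhedron polytope_imp_polyhedron polytope_convex_hull by blast
  then obtain a b where le: "convex hull V \<subseteq> {x. a \<bullet> x \<le> b}"
    and face: "closed_segment P Q = convex hull V \<inter> {x. a \<bullet> x = b}"
    unfolding exposed_face_of_def by blast
  have "a \<bullet> P = b" "a \<bullet> Q = b" using face ends_in_segment by blast+
  moreover have "a \<bullet> u \<le> b" if "u \<in> V" for u using le hull_inc[OF that] by blast
  moreover have "v = P \<or> v = Q" if "v \<in> V" "a \<bullet> v = b" for v
  proof (rule closed_segment_norm_eq_endpoints)
    show "v \<in> closed_segment P Q" using face that hull_inc[of v V] by blast
    show "norm v = norm P" "norm Q = norm P" using sphere that \<open>Q \<in> V\<close> by auto
  qed
  ultimately have "{v \<in> V. \<forall>u\<in>V. a \<bullet> u \<le> a \<bullet> v} = {P, Q}"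
    using \<open>P \<in> V\<close> \<open>Q \<in> V\<close> by fastforce
  then show thesis by (rule that)
qed

lemma closed_segment_face_of_if_argmax_eq:
  fixes V :: "'a::euclidean_space set"
  assumes "finite V" "P \<in> V" "Q \<in> V" and argmax: "{v \<in> V. \<forall>u\<in>V. a \<bullet> u \<le> a \<bullet> v} = {P, Q}"
  shows "closed_segment P Q face_of convex hull V"
proof -
  define F where "F = convex hull V \<inter> {x. a \<bullet> x = a \<bullet> P}"
  have le: "\<forall>u\<in>V. a \<bullet> u \<le> a \<bullet> P" and "\<forall>u\<in>V. a \<bullet> u \<le> a \<bullet> Q"
    using argmax by blast+
  then have "a \<bullet> Q = a \<bullet> P" using assms(2,3) by (intro order_antisym) auto
  have "convex hull V \<subseteq> {x. a \<bullet> x \<le> a \<bullet> P}"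
    using le by (intro hull_minimal) (auto simp: convex_halfspace_le)
  then have "F face_of convex hull V"
    unfolding F_def by (intro face_of_Int_supporting_hyperplane_le) auto
  then obtain V' where "V' \<subseteq> V" "F = convex hull V'"
    using face_of_convex_hull_subset finite_imp_compact assms(1) by metis
  moreover have "V' \<subseteq> {P, Q}"
  proof
    fix v assume "v \<in> V'"
    then have "v \<in> V" "a \<bullet> v = a \<bullet> P"
      using \<open>V' \<subseteq> V\<close> \<open>F = convex hull V'\<close> hull_inc[of v V'] by (auto simp: F_def)
    then show "v \<in> {P, Q}" using le argmax by auto
  qed
  ultimately have "F \<subseteq> closed_segment P Q"
    by (simp add: segment_convex_hull hull_mono)
  moreover have "closed_segment P Q \<subseteq> F"
  proof -
    have "P \<in> F" "Q \<in> F" "convex F"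
      using assms(2,3) hull_inc \<open>a \<bullet> Q = a \<bullet> P\<close> \<open>F face_of _\<close> face_of_imp_convex
      by (auto simp: F_def)
    then show ?thesis by (simp add: closed_segment_subset)
  qed
  ultimately show ?thesis using \<open>F face_of _\<close> by simp
qed

lemma closed_segment_face_of_convex_hull_iff:
  fixes V :: "'a::euclidean_space set"
  assumes V: "finite V" "P \<in> V" "Q \<in> V" and sphere: "\<And>v. v \<in> V \<Longrightarrow> norm v = norm P"
  shows "closed_segment P Q face_of convex hull V
    \<longleftrightarrow> (\<exists>a. {v \<in> V. \<forall>u\<in>V. a \<bullet> u \<le> a \<bullet> v} = {P, Q})"
proof
  assume face: "closed_segment P Q face_of convex hull V"
  obtain a where "{v \<in> V. \<forall>u\<in>V. a \<bullet> u \<le> a \<bullet> v} = {P, Q}"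
    by (rule argmax_eq_if_closed_segment_face_of[OF V sphere face])
  then show "\<exists>a. {v \<in> V. \<forall>u\<in>V. a \<bullet> u \<le> a \<bullet> v} = {P, Q}" ..
next
  assume "\<exists>a. {v \<in> V. \<forall>u\<in>V. a \<bullet> u \<le> a \<bullet> v} = {P, Q}"
  then obtain a where "{v \<in> V. \<forall>u\<in>V. a \<bullet> u \<le> a \<bullet> v} = {P, Q}" ..
  then show "closed_segment P Q face_of convex hull V"
    by (rule closed_segment_face_of_if_argmax_eq[OF V])
qed

lemma strict_mono_coord_idx: "strict_mono (coord_idx :: 'n::{finite,linorder} \<Rightarrow> nat)"
proof (rule strict_monoI)
  fix j k :: 'n assume "j < k"
  then have "{i. i < j} \<subset> {i. i < k}" by auto
  then show "coord_idx j < coord_idx k" unfolding coord_idx_def by (simp add: psubset_card_mono)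
qed

lemma bij_betw_coord_idx:
  assumes "CARD('n::{finite,linorder}) = n"
  shows "bij_betw (coord_idx :: 'n \<Rightarrow> nat) UNIV {1..n}"
proof -
  have inj: "inj (coord_idx :: 'n \<Rightarrow> nat)"
    using strict_mono_coord_idx by (rule strict_mono_on_imp_inj_on)
  have "coord_idx j \<in> {1..n}" for j :: 'n
  proof -
    have "{i. i < j} \<subset> UNIV" by auto
    then have "card {i. i < j} < n" using assms by (metis psubset_card_mono finite)
    then show ?thesis by (simp add: coord_idx_def)
  qed
  then have "range (coord_idx :: 'n \<Rightarrow> nat) \<subseteq> {1..n}" by auto
  moreover have "card (range (coord_idx :: 'n \<Rightarrow> nat)) = card {1..n}"
    using card_image[OF inj] assms by simp
  ultimately have "range (coord_idx :: 'n \<Rightarrow> nat) = {1..n}"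
    by (intro card_subset_eq) auto
  with inj show ?thesis by (simp add: bij_betw_def)
qed

lemma inner_coord_perm_point:
  assumes "CARD('n::{finite,linorder}) = n"
  shows "(\<chi> k. w (coord_idx k)) \<bullet> (perm_point \<sigma> :: real ^ 'n::{finite,linorder}) = weight n w \<sigma>"
  unfolding inner_vec_def perm_point_def weight_def
  using sum.reindex_bij_betw[OF bij_betw_coord_idx[OF assms], of "\<lambda>x. w x * real (\<sigma> x)"] by simp

lemma vec_eq_coord_idx:
  fixes a :: "real ^ 'n::{finite,linorder}"
  obtains w where "a = (\<chi> k. w (coord_idx k))"
proof
  have "inj (coord_idx :: 'n \<Rightarrow> nat)"
    using strict_mono_coord_idx by (rule strict_mono_on_imp_inj_on)
  then show "a = (\<chi> k. (\<lambda>x. a $ inv coord_idx x) (coord_idx k))" by (simp add: vec_eq_iff)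
qed

lemma norm_perm_point_eq:
  assumes "CARD('n::{finite,linorder}) = n" "\<sigma> permutes {1..n}" "\<tau> permutes {1..n}"
  shows "norm (perm_point \<sigma> :: real ^ 'n::{finite,linorder}) = norm (perm_point \<tau> :: real ^ 'n::{finite,linorder})"
proof -
  have "(perm_point \<rho> :: real ^ 'n::{finite,linorder}) \<bullet> perm_point \<rho> = (\<Sum>x\<in>{1..n}. real x * real x)"
    if "\<rho> permutes {1..n}" for \<rho>
  proof -
    have "(perm_point \<rho> :: real ^ 'n::{finite,linorder}) \<bullet> perm_point \<rho> = weight n (\<lambda>x. real (\<rho> x)) \<rho>"
      using inner_coord_perm_point[OF assms(1), where w = "\<lambda>x. real (\<rho> x)" and \<sigma> = \<rho>]
      by (simp add: perm_point_def)
    also have "\<dots> = (\<Sum>x\<in>{1..n}. real x * real x)"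
      unfolding weight_def using sum.permute[OF that, of "\<lambda>x. real x * real x"] by simp
    finally show ?thesis .
  qed
  then show ?thesis using assms(2,3) by (simp add: norm_eq)
qed

lemma inj_on_perm_point:
  assumes "CARD('n::{finite,linorder}) = n"
  shows "inj_on (perm_point :: _ \<Rightarrow> real ^ 'n::{finite,linorder}) {\<sigma>. \<sigma> permutes {1..n}}"
proof (rule inj_onI)
  fix \<sigma> \<tau> assume "\<sigma> \<in> {\<sigma>. \<sigma> permutes {1..n}}" "\<tau> \<in> {\<sigma>. \<sigma> permutes {1..n}}"
    and eq: "(perm_point \<sigma> :: real ^ 'n::{finite,linorder}) = perm_point \<tau>"
  then have perms: "\<sigma> permutes {1..n}" "\<tau> permutes {1..n}" by simp_all
  show "\<sigma> = \<tau>"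
  proof
    fix x
    show "\<sigma> x = \<tau> x"
    proof (cases "x \<in> {1..n}")
      case True
      then obtain k :: 'n where k: "coord_idx k = x"
        using bij_betw_coord_idx[OF assms] by (metis bij_betw_def imageE)
      have "(perm_point \<sigma> :: real ^ 'n::{finite,linorder}) $ k = perm_point \<tau> $ k" using eq by simp
      then show ?thesis unfolding perm_point_def using k by simp
    next
      case False
      then show ?thesis using permutes_not_in[OF perms(1)] permutes_not_in[OF perms(2)] by simp
    qed
  qed
qed

lemma argmax_perm_point:
  assumes "CARD('n::{finite,linorder}) = n"
  shows "{v \<in> perm_point ` S_J n J. \<forall>u \<in> (perm_point ` S_J n J :: (real ^ 'n::{finite,linorder}) set).
      (\<chi> k. w (coord_idx k)) \<bullet> u \<le> (\<chi> k. w (coord_idx k)) \<bullet> v}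
    = (perm_point ` maximizers n J w :: (real ^ 'n::{finite,linorder}) set)" (is "?L = ?R")
proof (intro set_eqI iffI)
  note inner = inner_coord_perm_point[OF assms]
  fix v
  assume "v \<in> ?L"
  then obtain \<sigma> where "\<sigma> \<in> S_J n J" "v = perm_point \<sigma>" "\<forall>\<tau>\<in>S_J n J. weight n w \<tau> \<le> weight n w \<sigma>"
    by (auto simp: inner)
  then show "v \<in> ?R" by (auto simp: maximizers_def)
next
  note inner = inner_coord_perm_point[OF assms]
  fix v
  assume "v \<in> ?R"
  then show "v \<in> ?L" by (auto simp: maximizers_def inner)
qed

lemma exists_argmax_perm_point_iff:
  assumes n: "CARD('n::{finite,linorder}) = n" and \<pi>: "\<pi> \<in> S_J n J" and \<pi>': "\<pi>' \<in> S_J n J"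
  defines "V \<equiv> perm_point ` S_J n J :: (real ^ 'n::{finite,linorder}) set"
  shows "(\<exists>a. {v \<in> V. \<forall>u\<in>V. a \<bullet> u \<le> a \<bullet> v} = {perm_point \<pi>, perm_point \<pi>'})
    \<longleftrightarrow> (\<exists>w. maximizers n J w = {\<pi>, \<pi>'})"
proof -
  have "S_J n J \<subseteq> {\<sigma>. \<sigma> permutes {1..n}}" using S_J_permutes by blast
  then have "inj_on (perm_point :: _ \<Rightarrow> real ^ 'n::{finite,linorder}) (S_J n J)"
    by (rule inj_on_subset[OF inj_on_perm_point[OF n]])
  then have image_iff: "perm_point ` maximizers n J w = (perm_point ` {\<pi>, \<pi>'} :: (real ^ 'n::{finite,linorder}) set)
      \<longleftrightarrow> maximizers n J w = {\<pi>, \<pi>'}" for w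
    using inj_on_image_eq_iff maximizers_S_J \<pi> \<pi>' by (metis empty_subsetI insert_subset)
  show ?thesis
  proof
    assume "\<exists>a. {v \<in> V. \<forall>u\<in>V. a \<bullet> u \<le> a \<bullet> v} = {perm_point \<pi>, perm_point \<pi>'}"
    then obtain a where a: "{v \<in> V. \<forall>u\<in>V. a \<bullet> u \<le> a \<bullet> v} = {perm_point \<pi>, perm_point \<pi>'}" ..
    obtain w where "a = (\<chi> k. w (coord_idx k))" by (rule vec_eq_coord_idx)
    then have "maximizers n J w = {\<pi>, \<pi>'}"
      using a argmax_perm_point[OF n] image_iff unfolding V_def by auto
    then show "\<exists>w. maximizers n J w = {\<pi>, \<pi>'}" by blast
  next
    assume "\<exists>w. maximizers n J w = {\<pi>, \<pi>'}"
    then obtain w where "maximizers n J w = {\<pi>, \<pi>'}" ..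
    then show "\<exists>a. {v \<in> V. \<forall>u\<in>V. a \<bullet> u \<le> a \<bullet> v} = {perm_point \<pi>, perm_point \<pi>'}"
      using argmax_perm_point[OF n, of J w] unfolding V_def by auto
  qed
qed

lemma joined_by_edge_perm_point_iff:
  assumes n: "CARD('n::{finite,linorder}) = n" and \<pi>: "\<pi> \<in> S_J n J" and \<pi>': "\<pi>' \<in> S_J n J"
  shows "joined_by_edge (bridge_polytope n J :: (real ^ 'n::{finite,linorder}) set)
      (perm_point \<pi>) (perm_point \<pi>')
    \<longleftrightarrow> \<pi> \<noteq> \<pi>' \<and> (\<exists>w. maximizers n J w = {\<pi>, \<pi>'})"
proof -
  let ?V = "perm_point ` S_J n J :: (real ^ 'n::{finite,linorder}) set"
  have perms: "S_J n J \<subseteq> {\<sigma>. \<sigma> permutes {1..n}}" using S_J_permutes by blast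
  then have "finite ?V" by (intro finite_imageI finite_subset[OF perms]) (simp add: finite_permutations)
  moreover have "perm_point \<pi> \<in> ?V" "perm_point \<pi>' \<in> ?V" using \<pi> \<pi>' by simp_all
  moreover have "norm v = norm (perm_point \<pi> :: real ^ 'n::{finite,linorder})" if "v \<in> ?V" for v
    using that norm_perm_point_eq[OF n S_J_permutes S_J_permutes[OF \<pi>]] by blast
  ultimately have "closed_segment (perm_point \<pi>) (perm_point \<pi>') face_of convex hull ?V
      \<longleftrightarrow> (\<exists>w. maximizers n J w = {\<pi>, \<pi>'})"
    using exists_argmax_perm_point_iff[OF n \<pi> \<pi>'] closed_segment_face_of_convex_hull_iff by blast
  moreover have "perm_point \<pi> = (perm_point \<pi>' :: real ^ 'n::{finite,linorder}) \<longleftrightarrow> \<pi> = \<pi>'"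
    using inj_on_perm_point[OF n] perms \<pi> \<pi>' by (auto dest: inj_onD)
  ultimately show ?thesis
    unfolding joined_by_edge_def bridge_polytope_def by blast
qed

theorem theorem3p4:
  fixes n k :: nat and J :: "nat set" and \<pi> \<pi>' :: "nat \<Rightarrow> nat"
  assumes "CARD('n) = n"
    and "n \<ge> 1"
    and "J \<subseteq> {1..n}" and "card J = k"
    and "\<pi> \<in> S_J n J" and "\<pi>' \<in> S_J n J"
  shows "joined_by_edge (bridge_polytope n J :: (real ^ 'n::{finite,linorder}) set) (perm_point \<pi>) (perm_point \<pi>')
    \<longleftrightarrow> (\<exists>i l. i \<in> {1..n} \<and> l \<in> {1..n} \<and> i < l \<and> \<pi>' = Transposition.transpose i l \<circ> \<pi> \<and>
                 (\<forall>j. i < j \<and> j < l \<longrightarrow> \<pi> j = j \<and> \<pi>' j = j))"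
  using joined_by_edge_perm_point_iff[OF assms(1,5,6)]
    bridge_swap_iff_unique_maximizers[OF assms(3,5,6)]
  unfolding bridge_swap_def by simp

end
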